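(* Let $G$ be a finitely generated group hyperbolic relative to a finite collection $\mathcal P$, $S$ a finite generating set, and let $(\epsilon,R,D)$ be thin-triangle constants. Let $U$ be a finite subset of $V\cup W$ that is not a single element of $W$. Then any two elements $a,b$ of the quasi-centre of $U$ satisfy $|a,b|_S\le 4D$.
   Context: $\Gamma$ is the Cayley graph of $G$ w.r.t. $S$, $V=G$, $W$ the set of cosets $gP_\lambda$; relative hyperbolicity means the coned-off Cayley graph (vertex set $V\cup W$, edges of $\Gamma$ plus edges $(v,w)$ for $v\in w$) is fine and $\delta$-hyperbolic. $|\cdot,\cdot|_S$ is extended to $V\cup W$ via distances in $\Gamma$ between corresponding elements/cosets. For a geodesic edge-path $p=(p_j)_{j=0}^\ell$ in $\Gamma$, $p_i$ is $(\epsilon,R)$-deep in $w\in W$ if $R\le i\le\ell-R$ and $|p_j,w|_S\le\epsilon$ for all $|j-i|\le R$. A geodesic from $a\in V\cup W$ to $b\in V\cup W$ is a geodesic of length $|a,b|_S$ starting at $a$ (if $a\in V$) or in $a$ (if $a\in W$), and ending analogously at $b$; for $i>\ell$, $p_i:=p_\ell$. Positive integers $(\epsilon,R,D)$ are thin-triangle constants if: $D\ge\epsilon$; no vertex of a geodesic in $\Gamma$ is $(\epsilon,R)$-deep in two distinct cosets; and for all $a,b,c\in V\cup W$ with $a\ne b$, geodesics $p^{ab},p^{bc},p^{ac}$ from $a$ to $b$, $b$ to $c$, $a$ to $c$, $\ell=|a,b|_S$, $0\le i\le\ell$, setting $z=w$ if $p^{ab}_i$ is $(\epsilon,R)$-deep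 in $w$ and $z=p^{ab}_i$ otherwise, we have $|z,p^{ac}_i|_S\le D$ or $|z,p^{bc}_{\ell-i}|_S\le D$ (such constants exist). For finite $U\subset V\cup W$, the radius $\rho(U)$ is the least $\rho$ such that some $z\in V\cup W$ has $|z,u|_S\le\rho$ for all $u\in U$; the quasi-centre of $U$ is the set of $z\in V\cup W$ with $|z,u|_S\le\rho(U)$ for all $u\in U$. *)

theory Defs
  imports "HOL-Algebra.Algebra"
begin

definition cay_adj :: "('g,'m) monoid_scheme \<Rightarrow> 'g set \<Rightarrow> 'g \<Rightarrow> 'g \<Rightarrow> bool" where
  "cay_adj G S g h \<longleftrightarrow> g \<in> carrier G \<and> h \<in> carrier G \<and>
     (\<exists>s\<in>S. h = g \<otimes>\<^bsub>G\<^esub> s \<or> g = h \<otimes>\<^bsub>G\<^esub> s)"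

definition cay_path :: "('g,'m) monoid_scheme \<Rightarrow> 'g set \<Rightarrow> (nat \<Rightarrow> 'g) \<Rightarrow> nat \<Rightarrow> bool" where
  "cay_path G S p l \<longleftrightarrow> p 0 \<in> carrier G \<and> (\<forall>j<l. cay_adj G S (p j) (p (Suc j)))
     \<and> (\<forall>i\<ge>l. p i = p l)"

definition wdist :: "('g,'m) monoid_scheme \<Rightarrow> 'g set \<Rightarrow> 'g \<Rightarrow> 'g \<Rightarrow> nat" where
  "wdist G S g h = (LEAST n. \<exists>p. cay_path G S p n \<and> p 0 = g \<and> p n = h)"

definition cay_geodesic :: "('g,'m) monoid_scheme \<Rightarrow> 'g set \<Rightarrow> (nat \<Rightarrow> 'g) \<Rightarrow> nat \<Rightarrow> bool" where
  "cay_geodesic G S p l \<longleftrightarrow> cay_path G S p l \<and> l = wdist G S (p 0) (p l)"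

section \<open>Cosets W and the set V \<union> W (as a disjoint sum)\<close>

definition cosets :: "('g,'m) monoid_scheme \<Rightarrow> ('i \<Rightarrow> 'g set) \<Rightarrow> 'i set \<Rightarrow> 'g set set" where
  "cosets G P \<Lambda> = {g <#\<^bsub>G\<^esub> P k | g k. g \<in> carrier G \<and> k \<in> \<Lambda>}"

definition VW :: "('g,'m) monoid_scheme \<Rightarrow> ('i \<Rightarrow> 'g set) \<Rightarrow> 'i set \<Rightarrow> ('g + 'g set) set" where
  "VW G P \<Lambda> = Inl ` carrier G \<union> Inr ` cosets G P \<Lambda>"

fun elts :: "'g + 'g set \<Rightarrow> 'g set" where
  "elts (Inl g) = {g}"
| "elts (Inr w) = w"

text \<open>|x,y|_S on V \<union> W: distance in Gamma between the corresponding elements/cosets.\<close>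
definition vdist :: "('g,'m) monoid_scheme \<Rightarrow> 'g set \<Rightarrow> 'g + 'g set \<Rightarrow> 'g + 'g set \<Rightarrow> nat" where
  "vdist G S x y = Inf {wdist G S g h | g h. g \<in> elts x \<and> h \<in> elts y}"

definition deep :: "('g,'m) monoid_scheme \<Rightarrow> 'g set \<Rightarrow> nat \<Rightarrow> nat \<Rightarrow> (nat \<Rightarrow> 'g) \<Rightarrow> nat \<Rightarrow> nat \<Rightarrow> 'g set \<Rightarrow> bool" where
  "deep G S eps R p l i w \<longleftrightarrow> R \<le> i \<and> i + R \<le> l \<and>
     (\<forall>j. i - R \<le> j \<and> j \<le> i + R \<longrightarrow> vdist G S (Inl (p j)) (Inr w) \<le> eps)"

definition geodesic_from :: "('g,'m) monoid_scheme \<Rightarrow> 'g set \<Rightarrow> 'g + 'g set \<Rightarrow> 'g + 'g set \<Rightarrow> (nat \<Rightarrow> 'g) \<Rightarrow> bool" where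
  "geodesic_from G S a b p \<longleftrightarrow> cay_path G S p (vdist G S a b) \<and> p 0 \<in> elts a \<and> p (vdist G S a b) \<in> elts b"

definition thin_triangle_constants ::
  "('g,'m) monoid_scheme \<Rightarrow> 'g set \<Rightarrow> ('i \<Rightarrow> 'g set) \<Rightarrow> 'i set \<Rightarrow> nat \<Rightarrow> nat \<Rightarrow> nat \<Rightarrow> bool" where
  "thin_triangle_constants G S P \<Lambda> eps R D \<longleftrightarrow>
     0 < eps \<and> 0 < R \<and> 0 < D \<and> eps \<le> D \<and>
     (\<forall>p l i w1 w2. cay_geodesic G S p l \<and> w1 \<in> cosets G P \<Lambda> \<and> w2 \<in> cosets G P \<Lambda> \<and>
        deep G S eps R p l i w1 \<and> deep G S eps R p l i w2 \<longrightarrow> w1 = w2) \<and>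
     (\<forall>a\<in>VW G P \<Lambda>. \<forall>b\<in>VW G P \<Lambda>. \<forall>c\<in>VW G P \<Lambda>. \<forall>pab pbc pac. a \<noteq> b \<and>
        geodesic_from G S a b pab \<and> geodesic_from G S b c pbc \<and> geodesic_from G S a c pac \<longrightarrow>
        (\<forall>i \<le> vdist G S a b.
           (\<forall>w\<in>cosets G P \<Lambda>. deep G S eps R pab (vdist G S a b) i w \<longrightarrow>
               vdist G S (Inr w) (Inl (pac i)) \<le> D \<or>
               vdist G S (Inr w) (Inl (pbc (vdist G S a b - i))) \<le> D) \<and>
           ((\<forall>w\<in>cosets G P \<Lambda>. \<not> deep G S eps R pab (vdist G S a b) i w) \<longrightarrow>
               vdist G S (Inl (pab i)) (Inl (pac i)) \<le> D \<or>
               vdist G S (Inl (pab i)) (Inl (pbc (vdist G S a b - i))) \<le> D)))"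

definition radius :: "('g,'m) monoid_scheme \<Rightarrow> 'g set \<Rightarrow> ('i \<Rightarrow> 'g set) \<Rightarrow> 'i set \<Rightarrow> ('g + 'g set) set \<Rightarrow> nat" where
  "radius G S P \<Lambda> U = (LEAST \<rho>. \<exists>z\<in>VW G P \<Lambda>. \<forall>u\<in>U. vdist G S z u \<le> \<rho>)"

definition quasi_centre :: "('g,'m) monoid_scheme \<Rightarrow> 'g set \<Rightarrow> ('i \<Rightarrow> 'g set) \<Rightarrow> 'i set \<Rightarrow> ('g + 'g set) set \<Rightarrow> ('g + 'g set) set" where
  "quasi_centre G S P \<Lambda> U = {z \<in> VW G P \<Lambda>. \<forall>u\<in>U. vdist G S z u \<le> radius G S P \<Lambda> U}"

definition graph_path :: "('v \<Rightarrow> 'v \<Rightarrow> bool) \<Rightarrow> (nat \<Rightarrow> 'v) \<Rightarrow> nat \<Rightarrow> bool" where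
  "graph_path A p l \<longleftrightarrow> (\<forall>j<l. A (p j) (p (Suc j)))"

definition gdist :: "('v \<Rightarrow> 'v \<Rightarrow> bool) \<Rightarrow> 'v \<Rightarrow> 'v \<Rightarrow> nat" where
  "gdist A x y = (LEAST n. \<exists>p. graph_path A p n \<and> p 0 = x \<and> p n = y)"

definition graph_geodesic :: "('v \<Rightarrow> 'v \<Rightarrow> bool) \<Rightarrow> (nat \<Rightarrow> 'v) \<Rightarrow> nat \<Rightarrow> bool" where
  "graph_geodesic A p l \<longleftrightarrow> graph_path A p l \<and> l = gdist A (p 0) (p l)"

definition hyperbolic_graph :: "('v \<Rightarrow> 'v \<Rightarrow> bool) \<Rightarrow> 'v set \<Rightarrow> nat \<Rightarrow> bool" where
  "hyperbolic_graph A V \<delta> \<longleftrightarrow>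
     (\<forall>x\<in>V. \<forall>y\<in>V. \<exists>p n. graph_path A p n \<and> p 0 = x \<and> p n = y) \<and>
     (\<forall>p q r lp lq lr. graph_geodesic A p lp \<and> graph_geodesic A q lq \<and> graph_geodesic A r lr \<and>
        p 0 \<in> V \<and> q 0 = p lp \<and> r 0 = p 0 \<and> r lr = q lq \<longrightarrow>
        (\<forall>i\<le>lp. (\<exists>j\<le>lq. gdist A (p i) (q j) \<le> \<delta>) \<or> (\<exists>j\<le>lr. gdist A (p i) (r j) \<le> \<delta>)))"

definition circuit :: "('v \<Rightarrow> 'v \<Rightarrow> bool) \<Rightarrow> 'v list \<Rightarrow> bool" where
  "circuit A c \<longleftrightarrow> length c \<ge> 3 \<and> distinct c \<and>
     (\<forall>i<length c. A (c ! i) (c ! ((i + 1) mod length c)))"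

definition fine_graph :: "('v \<Rightarrow> 'v \<Rightarrow> bool) \<Rightarrow> bool" where
  "fine_graph A \<longleftrightarrow> (\<forall>x y n. A x y \<longrightarrow>
     finite {c. circuit A c \<and> length c = n \<and>
        (\<exists>i<length c. {c ! i, c ! ((i + 1) mod length c)} = {x, y})})"

definition cone_adj :: "('g,'m) monoid_scheme \<Rightarrow> 'g set \<Rightarrow> ('i \<Rightarrow> 'g set) \<Rightarrow> 'i set \<Rightarrow> 'g + 'g set \<Rightarrow> 'g + 'g set \<Rightarrow> bool" where
  "cone_adj G S P \<Lambda> x y \<longleftrightarrow> x \<in> VW G P \<Lambda> \<and> y \<in> VW G P \<Lambda> \<and> x \<noteq> y \<and>
     ((\<exists>g h. x = Inl g \<and> y = Inl h \<and> cay_adj G S g h) \<or>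
      (\<exists>v w. x = Inl v \<and> y = Inr w \<and> v \<in> w) \<or>
      (\<exists>v w. x = Inr w \<and> y = Inl v \<and> v \<in> w))"

definition relatively_hyperbolic :: "('g,'m) monoid_scheme \<Rightarrow> 'g set \<Rightarrow> ('i \<Rightarrow> 'g set) \<Rightarrow> 'i set \<Rightarrow> bool" where
  "relatively_hyperbolic G S P \<Lambda> \<longleftrightarrow>
     group G \<and> finite S \<and> S \<subseteq> carrier G \<and> generate G S = carrier G \<and>
     finite \<Lambda> \<and> (\<forall>k\<in>\<Lambda>. subgroup (P k) G) \<and>
     fine_graph (cone_adj G S P \<Lambda>) \<and> (\<exists>\<delta>. hyperbolic_graph (cone_adj G S P \<Lambda>) (VW G P \<Lambda>) \<delta>)"

end

theory Submission
  imports Defs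
begin

text \<open>
  If the radius \<open>\<rho>\<close> of \<open>U\<close> is at most \<open>D\<close>, both quasi-centres lie within \<open>D + \<rho>\<close> of a common
  vertex: a point of \<open>U\<close> itself, or the start of a geodesic between two points of \<open>U\<close>, which
  by thinness is \<open>D\<close>-close to a geodesic towards each quasi-centre.
  If \<open>\<rho> > D\<close> and two quasi-centres were more than \<open>4D\<close> apart, the midpoint of a geodesic
  between them (or the coset it is deep in) would be \<open>D\<close>-close to a point at least \<open>2D\<close> along a
  geodesic towards each \<open>u \<in> U\<close>, hence within \<open>max D (\<rho> - D) < \<rho>\<close> of all of \<open>U\<close>,
  contradicting minimality of \<open>\<rho>\<close>.
\<close>

subsection \<open>Paths in the Cayley graph\<close>

lemma cay_adj_sym: "cay_adj G S g h \<Longrightarrow> cay_adj G S h g"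
  unfolding cay_adj_def by blast

lemma cay_pathI:
  "p 0 \<in> carrier G \<Longrightarrow> (\<And>j. j < n \<Longrightarrow> cay_adj G S (p j) (p (Suc j)))
   \<Longrightarrow> (\<And>i. n \<le> i \<Longrightarrow> p i = p n) \<Longrightarrow> cay_path G S p n"
  unfolding cay_path_def by blast

lemma cay_path_adj: "cay_path G S p n \<Longrightarrow> j < n \<Longrightarrow> cay_adj G S (p j) (p (Suc j))"
  unfolding cay_path_def by blast

lemma cay_path_const: "cay_path G S p n \<Longrightarrow> n \<le> i \<Longrightarrow> p i = p n"
  unfolding cay_path_def by blast

lemma cay_path_carrier:
  assumes p: "cay_path G S p n"
  shows "p j \<in> carrier G"
proof -
  have carrier_upto: "p j \<in> carrier G" if "j \<le> n" for j
    using that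
  proof (induction j)
    case 0
    then show ?case using p unfolding cay_path_def by blast
  next
    case (Suc j)
    then have "cay_adj G S (p j) (p (Suc j))" using cay_path_adj[OF p] by simp
    then show ?case unfolding cay_adj_def by blast
  qed
  show ?thesis
    using carrier_upto[of j] carrier_upto[of n] cay_path_const[OF p, of j] by (cases "j \<le> n") auto
qed

lemma cay_path_append:
  assumes p: "cay_path G S p n" and q: "cay_path G S q m" and joint: "p n = q 0"
  shows "cay_path G S (\<lambda>j. if j \<le> n then p j else q (j - n)) (n + m)"
proof (rule cay_pathI)
  show "(if 0 \<le> n then p 0 else q (0 - n)) \<in> carrier G" using cay_path_carrier[OF p] by simp
next
  fix j assume j: "j < n + m"
  consider "Suc j \<le> n" | "j = n" | "n < j" by linarith
  then show "cay_adj G S (if j \<le> n then p j else q (j - n))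
                         (if Suc j \<le> n then p (Suc j) else q (Suc j - n))"
  proof cases
    case 1
    then show ?thesis using cay_path_adj[OF p, of j] by simp
  next
    case 2
    then show ?thesis using j joint cay_path_adj[OF q, of 0] by simp
  next
    case 3
    then have "Suc j - n = Suc (j - n)" "j - n < m" using j by auto
    then show ?thesis using 3 cay_path_adj[OF q, of "j - n"] by simp
  qed
next
  fix i assume "n + m \<le> i"
  then show "(if i \<le> n then p i else q (i - n)) = (if n + m \<le> n then p (n + m) else q (n + m - n))"
    using joint cay_path_const[OF p, of i] cay_path_const[OF q, of "i - n"] by (cases "m = 0") auto
qed

lemma cay_path_reverse:
  assumes p: "cay_path G S p n"
  shows "cay_path G S (\<lambda>j. p (n - j)) n"
proof (rule cay_pathI)
  show "p (n - 0) \<in> carrier G" using cay_path_carrier[OF p] .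
next
  fix j assume "j < n"
  then have "cay_adj G S (p (n - Suc j)) (p (Suc (n - Suc j)))" "Suc (n - Suc j) = n - j"
    using cay_path_adj[OF p] by simp_all
  then show "cay_adj G S (p (n - j)) (p (n - Suc j))" using cay_adj_sym by metis
qed simp

lemma cay_path_drop:
  assumes p: "cay_path G S p n"
  shows "cay_path G S (\<lambda>j. p (j + i)) (n - i)"
proof (rule cay_pathI)
  show "p (0 + i) \<in> carrier G" using cay_path_carrier[OF p] .
next
  fix j assume "j < n - i"
  then show "cay_adj G S (p (j + i)) (p (Suc j + i))" using cay_path_adj[OF p, of "j + i"] by simp
next
  fix j assume "n - i \<le> j"
  then show "p (j + i) = p (n - i + i)"
    using cay_path_const[OF p, of "j + i"] cay_path_const[OF p, of "n - i + i"] by auto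
qed

lemma wdist_le_path: "cay_path G S p n \<Longrightarrow> p 0 = g \<Longrightarrow> p n = h \<Longrightarrow> wdist G S g h \<le> n"
  unfolding wdist_def by (rule Least_le) blast

lemma wdist_path_exists:
  assumes "cay_path G S p n" "p 0 = g" "p n = h"
  shows "\<exists>q. cay_path G S q (wdist G S g h) \<and> q 0 = g \<and> q (wdist G S g h) = h"
  unfolding wdist_def by (rule LeastI_ex) (use assms in blast)

definition cay_reachable :: "('g,'m) monoid_scheme \<Rightarrow> 'g set \<Rightarrow> 'g \<Rightarrow> 'g \<Rightarrow> bool" where
  "cay_reachable G S g h \<longleftrightarrow> (\<exists>p n. cay_path G S p n \<and> p 0 = g \<and> p n = h)"

lemma cay_reachable_refl: "g \<in> carrier G \<Longrightarrow> cay_reachable G S g g"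
  unfolding cay_reachable_def by (rule exI[of _ "\<lambda>_. g"], rule exI[of _ 0]) (auto intro: cay_pathI)

lemma cay_reachable_adj:
  assumes "cay_adj G S g h"
  shows "cay_reachable G S g h"
  unfolding cay_reachable_def
  by (rule exI[of _ "\<lambda>j. if j = 0 then g else h"], rule exI[of _ 1])
     (use assms in \<open>auto intro!: cay_pathI simp: cay_adj_def\<close>)

lemma cay_reachable_trans:
  assumes "cay_reachable G S g h" "cay_reachable G S h k"
  shows "cay_reachable G S g k"
proof -
  obtain p n q m where "cay_path G S p n" "p 0 = g" "p n = h" "cay_path G S q m" "q 0 = h" "q m = k"
    using assms unfolding cay_reachable_def by blast
  with cay_path_append[of G S p n q m] show ?thesis
    unfolding cay_reachable_def by (cases "m = 0") fastforce+
qed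

lemma cay_reachable_generate:
  assumes G: "group G" "S \<subseteq> carrier G" and k: "k \<in> generate G S"
  shows "\<forall>g\<in>carrier G. cay_reachable G S g (g \<otimes>\<^bsub>G\<^esub> k)"
  using k
proof (induction k rule: generate.induct)
  interpret G: group G by fact
  case one
  then show ?case by (simp add: cay_reachable_refl)
next
  interpret G: group G by fact
  case (incl h)
  then show ?case using G by (auto intro!: cay_reachable_adj simp: cay_adj_def subsetD)
next
  interpret G: group G by fact
  case (inv h)
  show ?case
  proof
    fix g assume g: "g \<in> carrier G"
    have h: "h \<in> carrier G" using inv G by auto
    have "g = (g \<otimes>\<^bsub>G\<^esub> inv\<^bsub>G\<^esub> h) \<otimes>\<^bsub>G\<^esub> h" using g h by (simp add: G.m_assoc)
    then show "cay_reachable G S g (g \<otimes>\<^bsub>G\<^esub> inv\<^bsub>G\<^esub> h)"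
      using inv g h by (intro cay_reachable_adj) (simp add: cay_adj_def, blast)
  qed
next
  interpret G: group G by fact
  case (eng h1 h2)
  have h: "h1 \<in> carrier G" "h2 \<in> carrier G" using eng(1,2) G G.generate_incl by blast+
  show ?case
  proof
    fix g assume g: "g \<in> carrier G"
    have "cay_reachable G S g (g \<otimes>\<^bsub>G\<^esub> h1)"
      and "cay_reachable G S (g \<otimes>\<^bsub>G\<^esub> h1) ((g \<otimes>\<^bsub>G\<^esub> h1) \<otimes>\<^bsub>G\<^esub> h2)"
      using eng g h by simp_all
    then show "cay_reachable G S g (g \<otimes>\<^bsub>G\<^esub> (h1 \<otimes>\<^bsub>G\<^esub> h2))"
      using cay_reachable_trans g h by (metis G.m_assoc)
  qed
qed

subsection \<open>The word metric and its extension to \<open>V \<union> W\<close>\<close>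

definition proper_point :: "('g,'m) monoid_scheme \<Rightarrow> 'g + 'g set \<Rightarrow> bool" where
  "proper_point G x \<longleftrightarrow> elts x \<noteq> {} \<and> elts x \<subseteq> carrier G"

lemma proper_point_Inl: "g \<in> carrier G \<Longrightarrow> proper_point G (Inl g)"
  by (simp add: proper_point_def)

lemma vdist_le_wdist: "g \<in> elts x \<Longrightarrow> h \<in> elts y \<Longrightarrow> vdist G S x y \<le> wdist G S g h"
  unfolding vdist_def by (rule cInf_lower) auto

lemma vdist_attained:
  assumes "proper_point G x" "proper_point G y"
  shows "\<exists>g\<in>elts x. \<exists>h\<in>elts y. vdist G S x y = wdist G S g h"
proof -
  have "{wdist G S g h | g h. g \<in> elts x \<and> h \<in> elts y} \<noteq> {}"
    using assms unfolding proper_point_def by blast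
  from Inf_nat_def1[OF this] show ?thesis unfolding vdist_def by blast
qed

lemma vdist_path_suffix:
  assumes "cay_path G S p L" "p L \<in> elts c"
  shows "vdist G S (Inl (p i)) c \<le> L - i"
proof -
  have "vdist G S (Inl (p i)) c \<le> wdist G S (p i) (p L)" by (rule vdist_le_wdist) (simp_all add: assms(2))
  also have "\<dots> \<le> L - i"
    by (rule wdist_le_path[OF cay_path_drop[OF assms(1), of i]])
       (use cay_path_const[OF assms(1), of "L - i + i"] in \<open>auto split: if_splits\<close>)
  finally show ?thesis .
qed

locale coned_cayley_graph =
  fixes G :: "('g,'m) monoid_scheme" and S :: "'g set" and P :: "'i \<Rightarrow> 'g set" and \<Lambda> :: "'i set"
  assumes group: "group G" and gens_carrier: "S \<subseteq> carrier G"
    and generates: "generate G S = carrier G" and subgroups: "\<forall>k\<in>\<Lambda>. subgroup (P k) G"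
begin

lemma cay_reachable:
  assumes g: "g \<in> carrier G" and h: "h \<in> carrier G"
  shows "cay_reachable G S g h"
proof -
  interpret G: group G by (rule group)
  have "inv\<^bsub>G\<^esub> g \<otimes>\<^bsub>G\<^esub> h \<in> generate G S" using generates g h by simp
  then have "cay_reachable G S g (g \<otimes>\<^bsub>G\<^esub> (inv\<^bsub>G\<^esub> g \<otimes>\<^bsub>G\<^esub> h))"
    using cay_reachable_generate[OF group gens_carrier] g by blast
  then show ?thesis using g h by (simp add: G.m_assoc[symmetric])
qed

lemma wdist_geodesic_exists:
  assumes "g \<in> carrier G" "h \<in> carrier G"
  shows "\<exists>q. cay_path G S q (wdist G S g h) \<and> q 0 = g \<and> q (wdist G S g h) = h"
proof -
  obtain p n where "cay_path G S p n" "p 0 = g" "p n = h"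
    using cay_reachable[OF assms] unfolding cay_reachable_def by blast
  then show ?thesis by (rule wdist_path_exists)
qed

lemma wdist_commute:
  assumes "g \<in> carrier G" "h \<in> carrier G"
  shows "wdist G S h g = wdist G S g h"
proof -
  have "wdist G S h g \<le> wdist G S g h" if gh: "g \<in> carrier G" "h \<in> carrier G" for g h
  proof -
    obtain q where "cay_path G S q (wdist G S g h)" "q 0 = g" "q (wdist G S g h) = h"
      using wdist_geodesic_exists[OF gh] by blast
    then show ?thesis using wdist_le_path[OF cay_path_reverse] by simp
  qed
  then show ?thesis using assms by (meson antisym)
qed

lemma wdist_triangle:
  assumes "g \<in> carrier G" "h \<in> carrier G" "k \<in> carrier G"
  shows "wdist G S g k \<le> wdist G S g h + wdist G S h k"
proof -
  obtain p where p: "cay_path G S p (wdist G S g h)" "p 0 = g" "p (wdist G S g h) = h"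
    using wdist_geodesic_exists assms by blast
  obtain q where q: "cay_path G S q (wdist G S h k)" "q 0 = h" "q (wdist G S h k) = k"
    using wdist_geodesic_exists assms by blast
  show ?thesis
    using wdist_le_path[OF cay_path_append[OF p(1) q(1)]] p q by (cases "wdist G S h k = 0") auto
qed

lemma proper_point_VW: "x \<in> VW G P \<Lambda> \<Longrightarrow> proper_point G x"
proof (cases x)
  case (Inl g)
  then show "x \<in> VW G P \<Lambda> \<Longrightarrow> ?thesis" unfolding VW_def by (auto simp: proper_point_def)
next
  interpret G: group G by (rule group)
  case (Inr w)
  assume "x \<in> VW G P \<Lambda>"
  then obtain g k where gk: "g \<in> carrier G" "k \<in> \<Lambda>" "w = g <#\<^bsub>G\<^esub> P k"
    using Inr unfolding VW_def cosets_def by blast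
  have sg: "subgroup (P k) G" using subgroups gk(2) by blast
  have "g \<otimes>\<^bsub>G\<^esub> \<one>\<^bsub>G\<^esub> \<in> w"
    unfolding gk(3) l_coset_def using subgroup.one_closed[OF sg] by (rule UN_I) simp
  then have "g \<in> w" using gk(1) by simp
  moreover have "w \<subseteq> carrier G" unfolding gk(3) by (rule G.l_coset_subset_G[OF subgroup.subset[OF sg] gk(1)])
  ultimately show ?thesis using Inr unfolding proper_point_def by auto
qed

lemma vdist_self:
  assumes "x \<in> VW G P \<Lambda>"
  shows "vdist G S x x = 0"
proof -
  obtain g where g: "g \<in> elts x" "g \<in> carrier G"
    using proper_point_VW[OF assms] unfolding proper_point_def by blast
  have "cay_path G S (\<lambda>_. g) 0" by (rule cay_pathI) (simp_all add: g(2))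
  then have "wdist G S g g \<le> 0" by (rule wdist_le_path) simp_all
  then show ?thesis using vdist_le_wdist[OF g(1) g(1), of G S] by simp
qed

lemma vdist_commute:
  assumes "x \<in> VW G P \<Lambda>" "y \<in> VW G P \<Lambda>"
  shows "vdist G S y x = vdist G S x y"
proof -
  have "vdist G S y x \<le> vdist G S x y" if xy: "proper_point G x" "proper_point G y" for x y
  proof -
    obtain g h where gh: "g \<in> elts x" "h \<in> elts y" "vdist G S x y = wdist G S g h"
      using vdist_attained[OF xy] by blast
    have "vdist G S y x \<le> wdist G S h g" using vdist_le_wdist[OF gh(2,1)] .
    also have "\<dots> = wdist G S g h" using wdist_commute gh xy unfolding proper_point_def by blast
    finally show ?thesis using gh(3) by simp
  qed
  then show ?thesis using assms proper_point_VW by (meson antisym)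
qed

lemma vdist_triangle_Inl:
  assumes "x \<in> VW G P \<Lambda>" "y \<in> VW G P \<Lambda>" "m \<in> carrier G"
  shows "vdist G S x y \<le> vdist G S x (Inl m) + vdist G S (Inl m) y"
proof -
  have x: "proper_point G x" and y: "proper_point G y" using assms proper_point_VW by auto
  obtain g where g: "g \<in> elts x" "vdist G S x (Inl m) = wdist G S g m"
    using vdist_attained[OF x proper_point_Inl[OF assms(3)]] by auto
  obtain h where h: "h \<in> elts y" "vdist G S (Inl m) y = wdist G S m h"
    using vdist_attained[OF proper_point_Inl[OF assms(3)] y] by auto
  have "vdist G S x y \<le> wdist G S g h" using vdist_le_wdist[OF g(1) h(1)] .
  also have "\<dots> \<le> wdist G S g m + wdist G S m h"
    using wdist_triangle[OF _ assms(3)] g(1) h(1) x y unfolding proper_point_def by blast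
  finally show ?thesis using g h by simp
qed

lemma geodesic_from_exists:
  assumes "x \<in> VW G P \<Lambda>" "y \<in> VW G P \<Lambda>"
  obtains p where "geodesic_from G S x y p"
proof -
  have "proper_point G x" "proper_point G y" using assms proper_point_VW by auto
  moreover obtain g h where gh: "g \<in> elts x" "h \<in> elts y" "vdist G S x y = wdist G S g h"
    using vdist_attained[OF calculation] by blast
  ultimately have "g \<in> carrier G" "h \<in> carrier G" unfolding proper_point_def by blast+
  then obtain q where "cay_path G S q (wdist G S g h)" "q 0 = g" "q (wdist G S g h) = h"
    using wdist_geodesic_exists by blast
  then show ?thesis using that gh unfolding geodesic_from_def by metis
qed

end

subsection \<open>Thin triangles\<close>

text \<open>The vertex \<open>z\<close> of the thin-triangle condition attached to \<open>p\<^sub>i\<close>: the coset in which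
  \<open>p\<^sub>i\<close> is deep, if any, and \<open>p\<^sub>i\<close> itself otherwise.\<close>
definition coned_point ::
  "('g,'m) monoid_scheme \<Rightarrow> 'g set \<Rightarrow> ('i \<Rightarrow> 'g set) \<Rightarrow> 'i set \<Rightarrow> nat \<Rightarrow> nat \<Rightarrow> (nat \<Rightarrow> 'g) \<Rightarrow> nat \<Rightarrow> nat
    \<Rightarrow> 'g + 'g set" where
  "coned_point G S P \<Lambda> eps R p l i =
     (if \<exists>w\<in>cosets G P \<Lambda>. deep G S eps R p l i w
      then Inr (SOME w. w \<in> cosets G P \<Lambda> \<and> deep G S eps R p l i w) else Inl (p i))"

lemma coned_point_deep:
  assumes "\<exists>w\<in>cosets G P \<Lambda>. deep G S eps R p l i w"
  shows "\<exists>w\<in>cosets G P \<Lambda>. deep G S eps R p l i w \<and> coned_point G S P \<Lambda> eps R p l i = Inr w"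
  using someI_ex[of "\<lambda>w. w \<in> cosets G P \<Lambda> \<and> deep G S eps R p l i w"] assms
  unfolding coned_point_def by auto

lemma coned_point_less_R: "i < R \<Longrightarrow> coned_point G S P \<Lambda> eps R p l i = Inl (p i)"
  unfolding coned_point_def deep_def by auto

lemma coned_point_VW:
  assumes "cay_path G S p n"
  shows "coned_point G S P \<Lambda> eps R p l i \<in> VW G P \<Lambda>"
proof (cases "\<exists>w\<in>cosets G P \<Lambda>. deep G S eps R p l i w")
  case True
  then show ?thesis using coned_point_deep[OF True] unfolding VW_def by auto
next
  case False
  then show ?thesis using cay_path_carrier[OF assms] unfolding coned_point_def VW_def by auto
qed

lemma thin_triangle_constantsD:
  assumes ttc: "thin_triangle_constants G S P \<Lambda> eps R D"
    and VW: "a \<in> VW G P \<Lambda>" "b \<in> VW G P \<Lambda>" "c \<in> VW G P \<Lambda>" and "a \<noteq> b"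
    and geo: "geodesic_from G S a b pab" "geodesic_from G S b c pbc" "geodesic_from G S a c pac"
    and i: "i \<le> vdist G S a b"
  defines "z \<equiv> coned_point G S P \<Lambda> eps R pab (vdist G S a b) i"
  shows "vdist G S z (Inl (pac i)) \<le> D \<or> vdist G S z (Inl (pbc (vdist G S a b - i))) \<le> D"
proof -
  let ?l = "vdist G S a b"
  have "a \<noteq> b \<and> geodesic_from G S a b pab \<and> geodesic_from G S b c pbc \<and> geodesic_from G S a c pac"
    using \<open>a \<noteq> b\<close> geo by blast
  note thin = ttc[unfolded thin_triangle_constants_def, THEN conjunct2, THEN conjunct2, THEN conjunct2,
      THEN conjunct2, THEN conjunct2, rule_format, OF VW this i]
  show ?thesis
  proof (cases "\<exists>w\<in>cosets G P \<Lambda>. deep G S eps R pab ?l i w")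
    case True
    then show ?thesis using coned_point_deep[OF True] thin unfolding z_def by auto
  next
    case False
    then show ?thesis using thin unfolding z_def coned_point_def by auto
  qed
qed

lemma radius_le:
  assumes "z \<in> VW G P \<Lambda>" "\<forall>u\<in>U. vdist G S z u \<le> r"
  shows "radius G S P \<Lambda> U \<le> r"
  unfolding radius_def by (rule Least_le) (use assms in blast)

context coned_cayley_graph
begin

lemma thin_triangle_dist_le:
  assumes ttc: "thin_triangle_constants G S P \<Lambda> eps R D"
    and VW: "a \<in> VW G P \<Lambda>" "b \<in> VW G P \<Lambda>" "c \<in> VW G P \<Lambda>" and "a \<noteq> b"
    and p: "geodesic_from G S a b p" and i: "i \<le> vdist G S a b"
  shows "vdist G S (coned_point G S P \<Lambda> eps R p (vdist G S a b) i) c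
           \<le> D + max (vdist G S a c - i) (vdist G S b c - (vdist G S a b - i))"
proof -
  let ?z = "coned_point G S P \<Lambda> eps R p (vdist G S a b) i"
  have zVW: "?z \<in> VW G P \<Lambda>" using p coned_point_VW unfolding geodesic_from_def by blast
  have via: "vdist G S ?z c \<le> D + (vdist G S x c - j)"
    if q: "geodesic_from G S x c q" and close: "vdist G S ?z (Inl (q j)) \<le> D" for x q j
  proof -
    have "q j \<in> carrier G" using q cay_path_carrier unfolding geodesic_from_def by blast
    then have "vdist G S ?z c \<le> vdist G S ?z (Inl (q j)) + vdist G S (Inl (q j)) c"
      using vdist_triangle_Inl zVW VW(3) by blast
    also have "vdist G S (Inl (q j)) c \<le> vdist G S x c - j"
      using q vdist_path_suffix unfolding geodesic_from_def by blast
    finally show ?thesis using close by linarith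
  qed
  obtain pbc where pbc: "geodesic_from G S b c pbc" by (rule geodesic_from_exists[OF VW(2,3)])
  obtain pac where pac: "geodesic_from G S a c pac" by (rule geodesic_from_exists[OF VW(1,3)])
  from thin_triangle_constantsD[OF ttc VW \<open>a \<noteq> b\<close> p pbc pac i] show ?thesis
  proof
    assume "vdist G S ?z (Inl (pac i)) \<le> D"
    from via[OF pac this] show ?thesis by simp
  next
    assume "vdist G S ?z (Inl (pbc (vdist G S a b - i))) \<le> D"
    from via[OF pbc this] show ?thesis by simp
  qed
qed

lemma vertex_near_pair:
  assumes ttc: "thin_triangle_constants G S P \<Lambda> eps R D"
    and VW: "u1 \<in> VW G P \<Lambda>" "u2 \<in> VW G P \<Lambda>" and "u1 \<noteq> u2"
  obtains x where "x \<in> carrier G"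
    and "\<And>c. c \<in> VW G P \<Lambda> \<Longrightarrow> vdist G S (Inl x) c \<le> D + max (vdist G S u1 c) (vdist G S u2 c)"
proof -
  obtain p where p: "geodesic_from G S u1 u2 p" by (rule geodesic_from_exists[OF VW])
  have "0 < R" using ttc unfolding thin_triangle_constants_def by blast
  then have "coned_point G S P \<Lambda> eps R p (vdist G S u1 u2) 0 = Inl (p 0)"
    by (rule coned_point_less_R)
  then have "vdist G S (Inl (p 0)) c \<le> D + max (vdist G S u1 c) (vdist G S u2 c)"
    if "c \<in> VW G P \<Lambda>" for c
    using thin_triangle_dist_le[OF ttc VW that \<open>u1 \<noteq> u2\<close> p, of 0] by simp
  moreover have "p 0 \<in> carrier G" using p cay_path_carrier unfolding geodesic_from_def by blast
  ultimately show ?thesis using that by metis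
qed

text \<open>This is where \<open>U\<close> must not be a single coset: the quasi-centre of a coset contains all
  of its elements, which need not be close to each other.\<close>
lemma vertex_near_all:
  assumes ttc: "thin_triangle_constants G S P \<Lambda> eps R D"
    and U: "U \<subseteq> VW G P \<Lambda>" "U \<noteq> {}" "\<not> (\<exists>w\<in>cosets G P \<Lambda>. U = {Inr w})"
  obtains x where "x \<in> carrier G"
    and "\<And>c r. c \<in> VW G P \<Lambda> \<Longrightarrow> \<forall>u\<in>U. vdist G S c u \<le> r \<Longrightarrow> vdist G S (Inl x) c \<le> D + r"
proof (cases "\<exists>u1\<in>U. \<exists>u2\<in>U. u1 \<noteq> u2")
  case True
  then obtain u1 u2 where u: "u1 \<in> U" "u2 \<in> U" "u1 \<noteq> u2" by blast
  then have VW: "u1 \<in> VW G P \<Lambda>" "u2 \<in> VW G P \<Lambda>" using U(1) by auto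
  obtain x where x: "x \<in> carrier G"
    and near: "\<And>c. c \<in> VW G P \<Lambda> \<Longrightarrow> vdist G S (Inl x) c \<le> D + max (vdist G S u1 c) (vdist G S u2 c)"
    using vertex_near_pair[OF ttc VW u(3)] by blast
  have "vdist G S (Inl x) c \<le> D + r" if c: "c \<in> VW G P \<Lambda>" "\<forall>u\<in>U. vdist G S c u \<le> r" for c r
  proof -
    have "vdist G S u1 c \<le> r" "vdist G S u2 c \<le> r"
      using c(2) u(1,2) vdist_commute[OF VW(1) c(1)] vdist_commute[OF VW(2) c(1)] by auto
    then show ?thesis using near[OF c(1)] by (simp add: max_def split: if_splits)
  qed
  with x show ?thesis using that by blast
next
  case False
  then obtain u where U1: "U = {u}" using U(2) by blast
  then obtain y where y: "u = Inl y" "y \<in> carrier G" using U(1,3) unfolding VW_def by auto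
  then have yVW: "Inl y \<in> VW G P \<Lambda>" unfolding VW_def by blast
  have "vdist G S (Inl y) c \<le> D + r" if c: "c \<in> VW G P \<Lambda>" "\<forall>u\<in>U. vdist G S c u \<le> r" for c r
    using c(2) U1 y(1) vdist_commute[OF c(1) yVW] by simp
  from that[OF y(2) this] show ?thesis .
qed

lemma midpoint_near:
  assumes ttc: "thin_triangle_constants G S P \<Lambda> eps R D"
    and VW: "a \<in> VW G P \<Lambda>" "b \<in> VW G P \<Lambda>" and far: "4 * D \<le> vdist G S a b"
  obtains z where "z \<in> VW G P \<Lambda>"
    and "\<And>c. c \<in> VW G P \<Lambda> \<Longrightarrow> vdist G S z c \<le> D + (max (vdist G S a c) (vdist G S b c) - 2 * D)"
proof -
  let ?l = "vdist G S a b"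
  define i where "i = ?l div 2"
  have "0 < D" using ttc unfolding thin_triangle_constants_def by blast
  then have "a \<noteq> b" using far vdist_self VW by auto
  obtain p where p: "geodesic_from G S a b p" by (rule geodesic_from_exists[OF VW])
  let ?z = "coned_point G S P \<Lambda> eps R p ?l i"
  have i: "i \<le> ?l" "2 * D \<le> i" "2 * D \<le> ?l - i" using far unfolding i_def by auto
  have "vdist G S ?z c \<le> D + (max (vdist G S a c) (vdist G S b c) - 2 * D)"
    if "c \<in> VW G P \<Lambda>" for c
  proof -
    have "max (vdist G S a c - i) (vdist G S b c - (?l - i)) \<le> max (vdist G S a c) (vdist G S b c) - 2 * D"
      using i(2,3) by (simp add: max_def) arith
    then show ?thesis using thin_triangle_dist_le[OF ttc VW that \<open>a \<noteq> b\<close> p i(1)] by linarith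
  qed
  moreover have "?z \<in> VW G P \<Lambda>" using p coned_point_VW unfolding geodesic_from_def by blast
  ultimately show ?thesis using that by metis
qed

lemma quasi_centre_dist_le_if_radius_le:
  assumes ttc: "thin_triangle_constants G S P \<Lambda> eps R D"
    and U: "U \<subseteq> VW G P \<Lambda>" "U \<noteq> {}" "\<not> (\<exists>w\<in>cosets G P \<Lambda>. U = {Inr w})"
    and centres: "a \<in> quasi_centre G S P \<Lambda> U" "b \<in> quasi_centre G S P \<Lambda> U"
    and small: "radius G S P \<Lambda> U \<le> D"
  shows "vdist G S a b \<le> 4 * D"
proof -
  have VW: "a \<in> VW G P \<Lambda>" "b \<in> VW G P \<Lambda>"
    and centre: "\<forall>u\<in>U. vdist G S a u \<le> radius G S P \<Lambda> U" "\<forall>u\<in>U. vdist G S b u \<le> radius G S P \<Lambda> U"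
    using centres unfolding quasi_centre_def by auto
  obtain x where x: "x \<in> carrier G"
    and near: "\<And>c r. c \<in> VW G P \<Lambda> \<Longrightarrow> \<forall>u\<in>U. vdist G S c u \<le> r \<Longrightarrow> vdist G S (Inl x) c \<le> D + r"
    using vertex_near_all[OF ttc U] by blast
  have xVW: "Inl x \<in> VW G P \<Lambda>" using x unfolding VW_def by blast
  have "vdist G S a b \<le> vdist G S (Inl x) a + vdist G S (Inl x) b"
    using vdist_triangle_Inl[OF VW x] vdist_commute[OF xVW VW(1)] by simp
  then show ?thesis using near[OF VW(1) centre(1)] near[OF VW(2) centre(2)] small by linarith
qed

lemma radius_le_if_quasi_centres_far:
  assumes ttc: "thin_triangle_constants G S P \<Lambda> eps R D" and U: "U \<subseteq> VW G P \<Lambda>"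
    and centres: "a \<in> quasi_centre G S P \<Lambda> U" "b \<in> quasi_centre G S P \<Lambda> U"
    and far: "4 * D \<le> vdist G S a b"
  shows "radius G S P \<Lambda> U \<le> D"
proof (rule ccontr)
  let ?\<rho> = "radius G S P \<Lambda> U"
  assume "\<not> ?\<rho> \<le> D"
  have VW: "a \<in> VW G P \<Lambda>" "b \<in> VW G P \<Lambda>"
    and centre: "\<forall>u\<in>U. vdist G S a u \<le> ?\<rho>" "\<forall>u\<in>U. vdist G S b u \<le> ?\<rho>"
    using centres unfolding quasi_centre_def by auto
  obtain z where z: "z \<in> VW G P \<Lambda>"
    and near: "\<And>c. c \<in> VW G P \<Lambda> \<Longrightarrow> vdist G S z c \<le> D + (max (vdist G S a c) (vdist G S b c) - 2 * D)"
    using midpoint_near[OF ttc VW far] by blast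
  have "vdist G S z u \<le> D + (?\<rho> - 2 * D)" if u: "u \<in> U" for u
  proof -
    have "max (vdist G S a u) (vdist G S b u) - 2 * D \<le> ?\<rho> - 2 * D"
      using centre u by (intro diff_le_mono) simp
    moreover have "u \<in> VW G P \<Lambda>" using u U by blast
    ultimately show ?thesis using near by fastforce
  qed
  then have "?\<rho> \<le> D + (?\<rho> - 2 * D)" using z by (blast intro: radius_le)
  moreover have "0 < D" using ttc unfolding thin_triangle_constants_def by blast
  ultimately show False using \<open>\<not> ?\<rho> \<le> D\<close> by linarith
qed

end

theorem lemma3p6:
  fixes G :: "('g,'m) monoid_scheme" and S :: "'g set" and P :: "'i \<Rightarrow> 'g set" and \<Lambda> :: "'i set"
    and eps R D :: nat and U :: "('g + 'g set) set" and a b :: "'g + 'g set"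
  assumes "relatively_hyperbolic G S P \<Lambda>"
    and "thin_triangle_constants G S P \<Lambda> eps R D"
    and "finite U" and "U \<subseteq> VW G P \<Lambda>" and "U \<noteq> {}"
    and "\<not> (\<exists>w\<in>cosets G P \<Lambda>. U = {Inr w})"
    and "a \<in> quasi_centre G S P \<Lambda> U" and "b \<in> quasi_centre G S P \<Lambda> U"
  shows "vdist G S a b \<le> 4 * D"
proof -
  have "group G" "S \<subseteq> carrier G" "generate G S = carrier G" "\<forall>k\<in>\<Lambda>. subgroup (P k) G"
    using assms(1) unfolding relatively_hyperbolic_def by blast+
  then interpret coned_cayley_graph G S P \<Lambda> by (rule coned_cayley_graph.intro)
  show ?thesis
  proof (cases "4 * D \<le> vdist G S a b")
    case True
    then have "radius G S P \<Lambda> U \<le> D"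
      using radius_le_if_quasi_centres_far[OF assms(2,4,7,8)] by blast
    then show ?thesis using quasi_centre_dist_le_if_radius_le[OF assms(2,4,5,6,7,8)] by blast
  next
    case False
    then show ?thesis by simp
  qed
qed

end
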